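(* Let $S=\mathbb{C}[x_{ij}: 1\le i\le 4,\ 1\le j\le 3]$ with the $\mathbb{Z}^3$ column grading, and let $\Delta\in S$ be homogeneous of column degree $(1,1,1)$. Suppose $\Delta=ab+cd$ where $a,c$ are linear forms and $b,d$ are quadratic forms (homogeneous in the standard grading). Then there exist $a',b',c',d'\in S$, each homogeneous in the column grading, with $a',c'$ linear and $b',d'$ quadratic in the standard grading, such that $\Delta=a'b'+c'd'$.
   Context: The column grading is the $\mathbb{Z}^3$-grading with $\deg x_{i1}=(1,0,0)$, $\deg x_{i2}=(0,1,0)$, $\deg x_{i3}=(0,0,1)$ for $1\le i\le 4$ (the variables are the entries of a generic $4\times 3$ matrix, graded by column). *)

theory Defs
  imports Complex_Main "HOL-Library.Poly_Mapping"
begin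

text \<open>Polynomials in the variables x_(i,j): a monomial is a finitely supported
  exponent map (nat * nat) =>0 nat, a polynomial is a finitely supported
  coefficient map from monomials to complex numbers (ring structure from Poly_Mapping).\<close>

type_synonym mono = "(nat \<times> nat) \<Rightarrow>\<^sub>0 nat"
type_synonym mpoly = "mono \<Rightarrow>\<^sub>0 complex"

definition in_S :: "mpoly \<Rightarrow> bool" where
  "in_S p \<longleftrightarrow> (\<forall>m\<in>Poly_Mapping.keys p. Poly_Mapping.keys m \<subseteq> {1..4} \<times> {1..3})"

definition tdeg :: "mono \<Rightarrow> nat" where
  "tdeg m = (\<Sum>v\<in>Poly_Mapping.keys m. Poly_Mapping.lookup m v)"

definition coldeg :: "mono \<Rightarrow> nat \<Rightarrow> nat" where
  "coldeg m j = (\<Sum>i\<in>{1..4}. Poly_Mapping.lookup m (i, j))"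

definition coldeg3 :: "mono \<Rightarrow> nat \<times> nat \<times> nat" where
  "coldeg3 m = (coldeg m 1, coldeg m 2, coldeg m 3)"

definition std_homog :: "nat \<Rightarrow> mpoly \<Rightarrow> bool" where
  "std_homog d p \<longleftrightarrow> (\<forall>m\<in>Poly_Mapping.keys p. tdeg m = d)"

definition col_homog_deg :: "nat \<times> nat \<times> nat \<Rightarrow> mpoly \<Rightarrow> bool" where
  "col_homog_deg \<delta> p \<longleftrightarrow> (\<forall>m\<in>Poly_Mapping.keys p. coldeg3 m = \<delta>)"

definition col_homog :: "mpoly \<Rightarrow> bool" where
  "col_homog p \<longleftrightarrow> (\<exists>\<delta>. col_homog_deg \<delta> p)"

end

(* Write \<Delta> as a trilinear form in the three columns of the matrix and identify the linear
   forms a, c with their coefficient vectors \<alpha>, \<gamma>.  Since \<Delta> = a b + c d, the polynomial \<Delta>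
   vanishes on the subspace {\<alpha> = \<gamma> = 0}.  Scaling column j by s^(j-1) multiplies \<Delta> by s^3,
   so \<Delta> also vanishes on the scaled subspaces, and by continuity on their limit as s \<rightarrow> 0.
   After row-reducing the pair (\<alpha>, \<gamma>), this limit is cut out by the parts \<alpha>_p, \<gamma>_q of the two
   forms in their lowest nonzero columns p and q.  Evaluating the trilinear form at suitable points
   of this limit subspace then gives \<Delta> = \<alpha>_p B + \<gamma>_q W if p \<noteq> q, and \<Delta> = \<alpha>_p B + \<gamma>_p B'
   if p = q, where all four factors are homogeneous in the column grading. *)

theory Submission
  imports Defs
begin

lemma poly_mapping_eq_sum_single:
  fixes p :: "'a \<Rightarrow>\<^sub>0 'b::comm_monoid_add"
  assumes "finite K" "inj_on f K" "Poly_Mapping.keys p \<subseteq> f ` K"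
  shows "p = (\<Sum>k\<in>K. Poly_Mapping.single (f k) (Poly_Mapping.lookup p (f k)))"
proof (rule poly_mapping_eqI)
  fix m
  have "Poly_Mapping.lookup (\<Sum>k\<in>K. Poly_Mapping.single (f k) (Poly_Mapping.lookup p (f k))) m
      = (\<Sum>k\<in>K. if f k = m then Poly_Mapping.lookup p m else 0)"
    by (auto simp: lookup_sum lookup_single when_def intro!: sum.cong)
  also have "\<dots> = Poly_Mapping.lookup p m"
  proof (cases "m \<in> f ` K")
    case True
    then obtain k0 where "k0 \<in> K" "m = f k0" by auto
    with assms(1,2) have "(\<Sum>k\<in>K. if f k = m then Poly_Mapping.lookup p m else 0)
        = (\<Sum>k\<in>K. if k = k0 then Poly_Mapping.lookup p m else 0)"
      by (intro sum.cong) (auto simp: inj_on_def)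
    with \<open>k0 \<in> K\<close> assms(1) show ?thesis by simp
  next
    case False
    with assms(3) have "Poly_Mapping.lookup p m = 0" by (auto simp: in_keys_iff)
    with False show ?thesis by (auto intro: sum.neutral)
  qed
  finally show "Poly_Mapping.lookup p m =
      Poly_Mapping.lookup (\<Sum>k\<in>K. Poly_Mapping.single (f k) (Poly_Mapping.lookup p (f k))) m" ..
qed


definition eval_mono :: "mono \<Rightarrow> (nat \<times> nat \<Rightarrow> complex) \<Rightarrow> complex" where
  "eval_mono m x = (\<Prod>v\<in>Poly_Mapping.keys m. x v ^ Poly_Mapping.lookup m v)"

definition eval_poly :: "mpoly \<Rightarrow> (nat \<times> nat \<Rightarrow> complex) \<Rightarrow> complex" where
  "eval_poly p x = (\<Sum>m\<in>Poly_Mapping.keys p. Poly_Mapping.lookup p m * eval_mono m x)"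

lemma eval_mono_superset:
  "finite K \<Longrightarrow> Poly_Mapping.keys m \<subseteq> K \<Longrightarrow>
    eval_mono m x = (\<Prod>v\<in>K. x v ^ Poly_Mapping.lookup m v)"
  unfolding eval_mono_def by (rule prod.mono_neutral_left) (auto simp: in_keys_iff)

lemma eval_mono_add: "eval_mono (m + n) x = eval_mono m x * eval_mono n x"
proof -
  let ?K = "Poly_Mapping.keys m \<union> Poly_Mapping.keys n"
  have "eval_mono (m + n) x = (\<Prod>v\<in>?K. x v ^ Poly_Mapping.lookup (m + n) v)"
    by (rule eval_mono_superset) (auto dest: subsetD[OF keys_add])
  also have "\<dots> = eval_mono m x * eval_mono n x"
    by (simp add: lookup_add power_add prod.distrib eval_mono_superset[of ?K])
  finally show ?thesis .
qed

lemma eval_poly_superset: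
  "finite K \<Longrightarrow> Poly_Mapping.keys p \<subseteq> K \<Longrightarrow>
    eval_poly p x = (\<Sum>m\<in>K. Poly_Mapping.lookup p m * eval_mono m x)"
  unfolding eval_poly_def by (rule sum.mono_neutral_left) (auto simp: in_keys_iff)

lemma eval_poly_add: "eval_poly (p + q) x = eval_poly p x + eval_poly q x"
proof -
  let ?K = "Poly_Mapping.keys p \<union> Poly_Mapping.keys q"
  have "eval_poly (p + q) x = (\<Sum>m\<in>?K. Poly_Mapping.lookup (p + q) m * eval_mono m x)"
    by (rule eval_poly_superset) (auto dest: subsetD[OF keys_add])
  also have "\<dots> = eval_poly p x + eval_poly q x"
    by (simp add: lookup_add distrib_right sum.distrib eval_poly_superset[of ?K])
  finally show ?thesis .
qed

lemma eval_poly_single: "eval_poly (Poly_Mapping.single m c) x = c * eval_mono m x"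
  by (simp add: eval_poly_def)

lemma eval_poly_zero [simp]: "eval_poly 0 x = 0"
  by (simp add: eval_poly_def)

lemma eval_poly_sum: "eval_poly (\<Sum>i\<in>A. f i) x = (\<Sum>i\<in>A. eval_poly (f i) x)"
  by (induction A rule: infinite_finite_induct) (auto simp: eval_poly_add)

lemma eval_poly_mult: "eval_poly (p * q) x = eval_poly p x * eval_poly q x"
proof -
  let ?P = "\<lambda>p. \<Sum>m\<in>Poly_Mapping.keys p. Poly_Mapping.single m (Poly_Mapping.lookup p m)"
  have "p * q = ?P p * ?P q"
    using poly_mapping_eq_sum_single[of "Poly_Mapping.keys p" id p]
      poly_mapping_eq_sum_single[of "Poly_Mapping.keys q" id q] by simp
  also have "\<dots> = (\<Sum>m\<in>Poly_Mapping.keys p. \<Sum>n\<in>Poly_Mapping.keys q.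
      Poly_Mapping.single (m + n) (Poly_Mapping.lookup p m * Poly_Mapping.lookup q n))"
    by (simp add: sum_distrib_left sum_distrib_right mult_single) (rule sum.swap)
  finally have "eval_poly (p * q) x = (\<Sum>m\<in>Poly_Mapping.keys p. \<Sum>n\<in>Poly_Mapping.keys q.
      Poly_Mapping.lookup p m * Poly_Mapping.lookup q n * (eval_mono m x * eval_mono n x))"
    by (simp add: eval_poly_sum eval_poly_single eval_mono_add)
  also have "\<dots> = eval_poly p x * eval_poly q x"
    by (simp add: eval_poly_def sum_product mult_ac)
  finally show ?thesis .
qed

lemma continuous_on_eval_poly:
  "(\<And>v. continuous_on UNIV (\<lambda>s. z s v)) \<Longrightarrow> continuous_on UNIV (\<lambda>s::complex. eval_poly p (z s))"
  unfolding eval_poly_def eval_mono_def by (intro continuous_intros) auto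

definition var_mono :: "nat \<times> nat \<Rightarrow> mono" where
  "var_mono v = Poly_Mapping.single v 1"

definition trimono :: "nat \<Rightarrow> nat \<Rightarrow> nat \<Rightarrow> mono" where
  "trimono a b c = var_mono (a, 1) + var_mono (b, 2) + var_mono (c, 3)"

definition trilin :: "nat \<Rightarrow> nat \<Rightarrow> nat \<Rightarrow> (nat \<Rightarrow> nat \<Rightarrow> nat \<Rightarrow> complex) \<Rightarrow> mpoly" where
  "trilin p q r U = (\<Sum>a\<in>{1..4}. \<Sum>b\<in>{1..4}. \<Sum>c\<in>{1..4}.
      Poly_Mapping.single (var_mono (a, p) + var_mono (b, q) + var_mono (c, r)) (U a b c))"

definition col_form :: "(nat \<times> nat \<Rightarrow> complex) \<Rightarrow> nat \<Rightarrow> (nat \<times> nat \<Rightarrow> complex) \<Rightarrow> complex" where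
  "col_form \<alpha> j x = (\<Sum>i\<in>{1..4}. \<alpha> (i, j) * x (i, j))"

definition lin_form :: "(nat \<times> nat \<Rightarrow> complex) \<Rightarrow> (nat \<times> nat \<Rightarrow> complex) \<Rightarrow> complex" where
  "lin_form \<alpha> x = (\<Sum>j\<in>{1..3}. col_form \<alpha> j x)"

lemma lookup_var_mono: "Poly_Mapping.lookup (var_mono v) w = (if v = w then 1 else 0)"
  by (simp add: var_mono_def lookup_single when_def)

lemma keys_var_mono [simp]: "Poly_Mapping.keys (var_mono v) = {v}"
  by (simp add: var_mono_def)

lemma eval_mono_var_mono [simp]: "eval_mono (var_mono v) x = x v"
  by (simp add: var_mono_def eval_mono_def)

lemma inj_var_mono: "inj var_mono"
  by (rule injI) (metis lookup_var_mono zero_neq_one)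

lemma lookup_trimono:
  "Poly_Mapping.lookup (trimono a b c) (i, j) = (if j = 1 \<and> i = a then 1 else 0)
    + (if j = 2 \<and> i = b then 1 else 0) + (if j = 3 \<and> i = c then 1 else 0)"
  by (simp add: trimono_def lookup_add lookup_var_mono)

lemma trimono_inj:
  assumes "trimono a b c = trimono a' b' c'"
  shows "a = a' \<and> b = b' \<and> c = c'"
proof -
  have "(if a = a' then 1 else 0) = (1::nat)" "(if b = b' then 1 else 0) = (1::nat)"
    "(if c = c' then 1 else 0) = (1::nat)"
    using arg_cong[OF assms, of "\<lambda>m. Poly_Mapping.lookup m (a, 1)"]
      arg_cong[OF assms, of "\<lambda>m. Poly_Mapping.lookup m (b, 2)"]
      arg_cong[OF assms, of "\<lambda>m. Poly_Mapping.lookup m (c, 3)"]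
    by (simp_all add: lookup_trimono)
  then show ?thesis by (metis zero_neq_one)
qed

lemma keys_col_homog_111:
  assumes "in_S D" "col_homog_deg (1, 1, 1) D" "m \<in> Poly_Mapping.keys D"
  shows "\<exists>a\<in>{1..4}. \<exists>b\<in>{1..4}. \<exists>c\<in>{1..4}. m = trimono a b c"
proof -
  have box: "Poly_Mapping.keys m \<subseteq> {1..4} \<times> {1..3}"
    using assms(1,3) by (auto simp: in_S_def)
  have col_unique: "\<exists>k\<in>{1..4}. Poly_Mapping.lookup m (k, j) = 1 \<and>
      (\<forall>i\<in>{1..4}. k \<noteq> i \<longrightarrow> Poly_Mapping.lookup m (i, j) = 0)" if "coldeg m j = 1" for j
    using that unfolding coldeg_def by (simp add: sum_eq_Suc0_iff)
  have "coldeg m 1 = 1" "coldeg m 2 = 1" "coldeg m 3 = 1"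
    using assms(2,3) by (auto simp: col_homog_deg_def coldeg3_def)
  then obtain a b c where
    a: "a \<in> {1..4}" "Poly_Mapping.lookup m (a, 1) = 1" "\<forall>i\<in>{1..4}. a \<noteq> i \<longrightarrow> Poly_Mapping.lookup m (i, 1) = 0" and
    b: "b \<in> {1..4}" "Poly_Mapping.lookup m (b, 2) = 1" "\<forall>i\<in>{1..4}. b \<noteq> i \<longrightarrow> Poly_Mapping.lookup m (i, 2) = 0" and
    c: "c \<in> {1..4}" "Poly_Mapping.lookup m (c, 3) = 1" "\<forall>i\<in>{1..4}. c \<noteq> i \<longrightarrow> Poly_Mapping.lookup m (i, 3) = 0"
    using col_unique[of 1] col_unique[of 2] col_unique[of 3] by blast
  have "m = trimono a b c"
  proof (rule poly_mapping_eqI)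
    fix v :: "nat \<times> nat"
    obtain i j where v: "v = (i, j)" by (cases v)
    show "Poly_Mapping.lookup m v = Poly_Mapping.lookup (trimono a b c) v"
    proof (cases "v \<in> {1..4} \<times> {1..3}")
      case True
      then have "j = 1 \<or> j = 2 \<or> j = 3" "i \<in> {1..4}" using v by auto
      then show ?thesis
        using a(2,3) b(2,3) c(2,3) v
        by (elim disjE; cases "i = a"; cases "i = b"; cases "i = c") (simp_all add: lookup_trimono)
    next
      case False
      with box a(1) b(1) c(1) v show ?thesis by (auto simp: in_keys_iff lookup_trimono)
    qed
  qed
  with a(1) b(1) c(1) show ?thesis by blast
qed

lemma trilin_of_col_homog_111:
  assumes "in_S D" "col_homog_deg (1, 1, 1) D"
  shows "D = trilin 1 2 3 (\<lambda>a b c. Poly_Mapping.lookup D (trimono a b c))"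
proof -
  let ?K = "{1..4::nat} \<times> {1..4::nat} \<times> {1..4::nat}"
  let ?f = "\<lambda>(a, b, c). trimono a b c"
  have "D = (\<Sum>k\<in>?K. Poly_Mapping.single (?f k) (Poly_Mapping.lookup D (?f k)))"
  proof (rule poly_mapping_eq_sum_single)
    show "inj_on ?f ?K" by (auto simp: inj_on_def dest: trimono_inj)
    show "Poly_Mapping.keys D \<subseteq> ?f ` ?K"
    proof
      fix m assume "m \<in> Poly_Mapping.keys D"
      then obtain a b c where "a \<in> {1..4}" "b \<in> {1..4}" "c \<in> {1..4}" "m = trimono a b c"
        using keys_col_homog_111[OF assms] by blast
      then show "m \<in> ?f ` ?K" by (force intro: image_eqI[where x = "(a, b, c)"])
    qed
  qed simp
  also have "\<dots> = trilin 1 2 3 (\<lambda>a b c. Poly_Mapping.lookup D (trimono a b c))"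
    by (simp add: trilin_def trimono_def sum.cartesian_product split_def)
  finally show ?thesis .
qed

lemma keys_std_homog_1:
  assumes "in_S f" "std_homog 1 f" "m \<in> Poly_Mapping.keys f"
  shows "\<exists>v\<in>{1..4} \<times> {1..3}. m = var_mono v"
proof -
  have "tdeg m = 1" using assms(2,3) by (auto simp: std_homog_def)
  then obtain v where v: "v \<in> Poly_Mapping.keys m" "Poly_Mapping.lookup m v = 1"
      "\<forall>w\<in>Poly_Mapping.keys m. v \<noteq> w \<longrightarrow> Poly_Mapping.lookup m w = 0"
    unfolding tdeg_def sum_eq_1_iff[OF finite_keys] by blast
  have "m = var_mono v"
  proof (rule poly_mapping_eqI)
    fix w show "Poly_Mapping.lookup m w = Poly_Mapping.lookup (var_mono v) w"
      using v by (cases "w \<in> Poly_Mapping.keys m") (auto simp: lookup_var_mono in_keys_iff)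
  qed
  moreover have "v \<in> {1..4} \<times> {1..3}" using assms(1,3) v(1) by (auto simp: in_S_def)
  ultimately show ?thesis by blast
qed

lemma eval_poly_std_homog_1:
  assumes "in_S f" "std_homog 1 f"
  shows "eval_poly f x = lin_form (\<lambda>v. Poly_Mapping.lookup f (var_mono v)) x"
proof -
  have "f = (\<Sum>v\<in>{1..4} \<times> {1..3}. Poly_Mapping.single (var_mono v) (Poly_Mapping.lookup f (var_mono v)))"
    using keys_std_homog_1[OF assms] inj_var_mono
    by (intro poly_mapping_eq_sum_single) (auto intro: inj_on_subset)
  then have "eval_poly f x = (\<Sum>v\<in>{1..4} \<times> {1..3}. Poly_Mapping.lookup f (var_mono v) * x v)"
    by (metis (no_types, lifting) eval_poly_single eval_poly_sum eval_mono_var_mono sum.cong)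
  also have "\<dots> = (\<Sum>i\<in>{1..4}. \<Sum>j\<in>{1..3}. Poly_Mapping.lookup f (var_mono (i, j)) * x (i, j))"
    by (simp add: sum.cartesian_product split_def)
  also have "\<dots> = lin_form (\<lambda>v. Poly_Mapping.lookup f (var_mono v)) x"
    unfolding lin_form_def col_form_def by (rule sum.swap)
  finally show ?thesis .
qed

lemma eval_poly_trilin:
  "eval_poly (trilin p q r U) x =
    (\<Sum>a\<in>{1..4}. \<Sum>b\<in>{1..4}. \<Sum>c\<in>{1..4}. U a b c * x (a, p) * x (b, q) * x (c, r))"
  by (simp add: trilin_def eval_poly_sum eval_poly_single eval_mono_add mult_ac)

definition col_linear :: "nat \<Rightarrow> (nat \<Rightarrow> complex) \<Rightarrow> mpoly" where
  "col_linear p A = (\<Sum>a\<in>{1..4}. Poly_Mapping.single (var_mono (a, p)) (A a))"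

definition bilin :: "nat \<Rightarrow> nat \<Rightarrow> (nat \<Rightarrow> nat \<Rightarrow> complex) \<Rightarrow> mpoly" where
  "bilin q r B = (\<Sum>b\<in>{1..4}. \<Sum>c\<in>{1..4}. Poly_Mapping.single (var_mono (b, q) + var_mono (c, r)) (B b c))"

definition col_homog_split :: "mpoly \<Rightarrow> bool" where
  "col_homog_split D \<longleftrightarrow> (\<exists>a' b' c' d'. in_S a' \<and> in_S b' \<and> in_S c' \<and> in_S d'
    \<and> col_homog a' \<and> col_homog b' \<and> col_homog c' \<and> col_homog d'
    \<and> std_homog 1 a' \<and> std_homog 1 c' \<and> std_homog 2 b' \<and> std_homog 2 d'
    \<and> D = a' * b' + c' * d')"

lemma keys_sum_single_subset:
  "Poly_Mapping.keys (\<Sum>a\<in>A. Poly_Mapping.single (m a) (c a)) \<subseteq> m ` A"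
  using keys_sum[of "\<lambda>a. Poly_Mapping.single (m a) (c a)" A] by auto

lemma tdeg_add: "tdeg (m + n) = tdeg m + tdeg n"
proof -
  let ?K = "Poly_Mapping.keys m \<union> Poly_Mapping.keys n"
  have "tdeg m' = (\<Sum>v\<in>?K. Poly_Mapping.lookup m' v)" if "Poly_Mapping.keys m' \<subseteq> ?K" for m'
    unfolding tdeg_def using that by (intro sum.mono_neutral_left) (auto simp: in_keys_iff)
  then show ?thesis
    by (simp add: lookup_add sum.distrib keys_add[THEN subset_trans])
qed

lemma tdeg_var_mono: "tdeg (var_mono v) = 1"
  by (simp add: tdeg_def lookup_var_mono)

lemma coldeg_add: "coldeg (m + n) j = coldeg m j + coldeg n j"
  by (simp add: coldeg_def lookup_add sum.distrib)

lemma coldeg_var_mono: "a \<in> {1..4} \<Longrightarrow> coldeg (var_mono (a, p)) j = (if j = p then 1 else 0)"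
  by (simp add: coldeg_def lookup_var_mono)

lemma col_linear_props:
  assumes "p \<in> {1..3}"
  shows "in_S (col_linear p A) \<and> col_homog (col_linear p A) \<and> std_homog 1 (col_linear p A)"
proof -
  have keys: "Poly_Mapping.keys (col_linear p A) \<subseteq> (\<lambda>a. var_mono (a, p)) ` {1..4}"
    unfolding col_linear_def by (rule keys_sum_single_subset)
  then have "in_S (col_linear p A)"
    using assms by (fastforce simp: in_S_def)
  moreover have "col_homog_deg (coldeg3 (var_mono (1, p))) (col_linear p A)"
    using keys by (auto simp: col_homog_deg_def coldeg3_def coldeg_var_mono)
  moreover have "std_homog 1 (col_linear p A)"
    using keys by (auto simp: std_homog_def tdeg_var_mono)
  ultimately show ?thesis unfolding col_homog_def by blast
qed

lemma bilin_props:
  assumes "q \<in> {1..3}" "r \<in> {1..3}"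
  shows "in_S (bilin q r B) \<and> col_homog (bilin q r B) \<and> std_homog 2 (bilin q r B)"
proof -
  have keys: "Poly_Mapping.keys (bilin q r B) \<subseteq>
      (\<lambda>(b, c). var_mono (b, q) + var_mono (c, r)) ` ({1..4} \<times> {1..4})"
    unfolding bilin_def sum.cartesian_product
    using keys_sum_single_subset[of "\<lambda>(b, c). var_mono (b, q) + var_mono (c, r)"
        "\<lambda>(b, c). B b c" "{1..4} \<times> {1..4}"]
    by (simp add: split_def)
  then have "in_S (bilin q r B)"
    using assms by (fastforce simp: in_S_def dest!: subsetD[OF keys_add])
  moreover have "col_homog_deg (coldeg3 (var_mono (1, q) + var_mono (1, r))) (bilin q r B)"
    using keys by (auto simp: col_homog_deg_def coldeg3_def coldeg_add coldeg_var_mono)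
  moreover have "std_homog 2 (bilin q r B)"
    using keys by (auto simp: std_homog_def tdeg_add tdeg_var_mono)
  ultimately show ?thesis unfolding col_homog_def by blast
qed

lemma trilin_cong:
  assumes "\<And>a b c. a \<in> {1..4} \<Longrightarrow> b \<in> {1..4} \<Longrightarrow> c \<in> {1..4} \<Longrightarrow> U a b c = U' a b c"
  shows "trilin p q r U = trilin p q r U'"
  unfolding trilin_def using assms by (intro sum.cong refl) simp

lemma trilin_add: "trilin p q r (\<lambda>a b c. U a b c + U' a b c) = trilin p q r U + trilin p q r U'"
  by (simp add: trilin_def single_add sum.distrib)

lemma col_linear_mult_bilin: "col_linear p A * bilin q r B = trilin p q r (\<lambda>a b c. A a * B b c)"
  unfolding col_linear_def bilin_def trilin_def sum_distrib_right
  unfolding sum_distrib_left by (simp add: mult_single add.assoc)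

lemma trilin_swap12: "trilin p q r U = trilin q p r (\<lambda>b a c. U a b c)"
  unfolding trilin_def by (subst sum.swap) (simp add: add.commute)

lemma trilin_swap23: "trilin p q r U = trilin p r q (\<lambda>a c b. U a b c)"
  unfolding trilin_def by (subst (2) sum.swap) (simp add: add.commute add.left_commute)

lemma trilin_permute:
  assumes "p \<in> {1..3}" "q \<in> {1..3}" "p \<noteq> q"
  obtains r U where "r \<in> {1..3}" "r \<noteq> p" "r \<noteq> q" "trilin 1 2 3 T = trilin p q r U"
proof -
  have "(p, q) \<in> {(1, 2), (1, 3), (2, 1), (2, 3), (3, 1), (3, 2)}"
    using assms by auto
  then show ?thesis
  proof (elim insertE emptyE; simp only: prod.inject)
    assume "p = 1 \<and> q = 2" then show ?thesis
      using that[of 3 T] by simp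
  next
    assume "p = 1 \<and> q = 3" then show ?thesis
      using that[of 2] trilin_swap23[of 1 2 3 T] by simp
  next
    assume "p = 2 \<and> q = 1" then show ?thesis
      using that[of 3] trilin_swap12[of 1 2 3 T] by simp
  next
    assume "p = 2 \<and> q = 3" then show ?thesis
      using that[of 1] trilin_swap12[of 1 2 3 T] trilin_swap23[of 2 1 3] by simp
  next
    assume "p = 3 \<and> q = 1" then show ?thesis
      using that[of 2] trilin_swap23[of 1 2 3 T] trilin_swap12[of 1 3 2] by simp
  next
    assume "p = 3 \<and> q = 2" then show ?thesis
      using that[of 1] trilin_swap23[of 1 2 3 T] trilin_swap12[of 1 3 2] trilin_swap23[of 3 1 2]
      by simp
  qed
qed

definition unit_vec :: "nat \<Rightarrow> nat \<Rightarrow> complex" where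
  "unit_vec a i = (if i = a then 1 else 0)"

lemma sum_unit_vec: "finite A \<Longrightarrow> c \<in> A \<Longrightarrow> (\<Sum>i\<in>A. f i * unit_vec c i) = f c"
  by (simp add: unit_vec_def if_distrib sum.delta' cong: if_cong)

lemma sum_unit_vec_diff:
  "finite A \<Longrightarrow> a \<in> A \<Longrightarrow> b \<in> A \<Longrightarrow>
    (\<Sum>i\<in>A. f i * (unit_vec a i - k * unit_vec b i)) = f a - k * f b"
  by (simp add: right_diff_distrib sum_subtractf mult.left_commute sum_unit_vec flip: sum_distrib_left)

lemma sum_unit_vec_diff2:
  "finite A \<Longrightarrow> a \<in> A \<Longrightarrow> b \<in> A \<Longrightarrow> c \<in> A \<Longrightarrow>
    (\<Sum>i\<in>A. f i * (unit_vec a i - k * unit_vec b i - m * unit_vec c i)) = f a - k * f b - m * f c"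
  by (simp add: right_diff_distrib sum_subtractf mult.left_commute sum_unit_vec flip: sum_distrib_left)

definition col_point :: "nat \<Rightarrow> nat \<Rightarrow> (nat \<Rightarrow> complex) \<Rightarrow> (nat \<Rightarrow> complex) \<Rightarrow> (nat \<Rightarrow> complex)
    \<Rightarrow> nat \<times> nat \<Rightarrow> complex" where
  "col_point p q v w z = (\<lambda>(i, j). if j = p then v i else if j = q then w i else z i)"

lemma eval_poly_trilin_col_point:
  "p \<noteq> q \<Longrightarrow> p \<noteq> r \<Longrightarrow> q \<noteq> r \<Longrightarrow> eval_poly (trilin p q r U) (col_point p q v w z) =
    (\<Sum>a\<in>{1..4}. \<Sum>b\<in>{1..4}. \<Sum>c\<in>{1..4}. U a b c * v a * w b * z c)"
  by (simp add: eval_poly_trilin col_point_def)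

lemma col_form_col_point_fst: "col_form \<alpha> p (col_point p q v w z) = (\<Sum>i\<in>{1..4}. \<alpha> (i, p) * v i)"
  by (simp add: col_form_def col_point_def)

lemma col_form_col_point_snd:
  "p \<noteq> q \<Longrightarrow> col_form \<alpha> q (col_point p q v w z) = (\<Sum>i\<in>{1..4}. \<alpha> (i, q) * w i)"
  by (simp add: col_form_def col_point_def)

lemma col_homog_split_trilin_one_col:
  assumes cols: "p \<in> {1..3}" "q \<in> {1..3}" "r \<in> {1..3}" "p \<noteq> q" "p \<noteq> r" "q \<noteq> r"
    and rows: "i0 \<in> {1..4}" "i1 \<in> {1..4}"
    and pivots: "\<alpha> (i0, p) \<noteq> 0" "\<gamma> (i0, p) = 0" "\<gamma> (i1, p) \<noteq> 0"
    and vanish: "\<And>x. col_form \<alpha> p x = 0 \<Longrightarrow> col_form \<gamma> p x = 0 \<Longrightarrow> eval_poly (trilin p q r U) x = 0"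
  shows "col_homog_split (trilin p q r U)"
proof -
  define \<sigma> where "\<sigma> a = \<gamma> (a, p) / \<gamma> (i1, p)" for a
  define \<rho> where "\<rho> a = (\<alpha> (a, p) - \<sigma> a * \<alpha> (i1, p)) / \<alpha> (i0, p)" for a
  have kernel: "\<alpha> (a, p) - \<rho> a * \<alpha> (i0, p) - \<sigma> a * \<alpha> (i1, p) = 0"
    "\<gamma> (a, p) - \<rho> a * \<gamma> (i0, p) - \<sigma> a * \<gamma> (i1, p) = 0" for a
    using pivots by (simp_all add: \<rho>_def \<sigma>_def)
  have U_eq: "U a b c = \<rho> a * U i0 b c + \<sigma> a * U i1 b c"
    if abc: "a \<in> {1..4}" "b \<in> {1..4}" "c \<in> {1..4}" for a b c
  proof -
    let ?x = "col_point p q (\<lambda>i. unit_vec a i - \<rho> a * unit_vec i0 i - \<sigma> a * unit_vec i1 i)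
      (unit_vec b) (unit_vec c)"
    have "col_form \<alpha> p ?x = 0" "col_form \<gamma> p ?x = 0"
      using abc rows kernel unfolding col_form_col_point_fst by (simp_all add: sum_unit_vec_diff2)
    then have "eval_poly (trilin p q r U) ?x = 0" by (rule vanish)
    with abc rows cols show ?thesis
      by (simp add: eval_poly_trilin_col_point sum_unit_vec sum_unit_vec_diff2 diff_eq_eq)
  qed
  have "trilin p q r U = trilin p q r (\<lambda>a b c. \<rho> a * U i0 b c + \<sigma> a * U i1 b c)"
    by (rule trilin_cong) (rule U_eq)
  also have "\<dots> = col_linear p \<rho> * bilin q r (U i0) + col_linear p \<sigma> * bilin q r (U i1)"
    by (simp only: trilin_add col_linear_mult_bilin)
  finally show ?thesis
    using col_linear_props[OF cols(1)] bilin_props[OF cols(2,3)]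
    unfolding col_homog_split_def by blast
qed

lemma col_homog_split_trilin_two_cols:
  assumes cols: "p \<in> {1..3}" "q \<in> {1..3}" "r \<in> {1..3}" "p \<noteq> q" "p \<noteq> r" "q \<noteq> r"
    and rows: "i0 \<in> {1..4}" "j0 \<in> {1..4}"
    and pivots: "\<alpha> (i0, p) \<noteq> 0" "\<gamma> (j0, q) \<noteq> 0"
    and vanish: "\<And>x. col_form \<alpha> p x = 0 \<Longrightarrow> col_form \<gamma> q x = 0 \<Longrightarrow> eval_poly (trilin p q r U) x = 0"
  shows "col_homog_split (trilin p q r U)"
proof -
  define \<kappa> where "\<kappa> a = \<alpha> (a, p) / \<alpha> (i0, p)" for a
  define \<eta> where "\<eta> b = \<gamma> (b, q) / \<gamma> (j0, q)" for b
  define W where "W a c = U a j0 c - \<kappa> a * U i0 j0 c" for a c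
  have U_eq: "U a b c = \<kappa> a * U i0 b c + \<eta> b * W a c"
    if abc: "a \<in> {1..4}" "b \<in> {1..4}" "c \<in> {1..4}" for a b c
  proof -
    let ?x = "col_point p q (\<lambda>i. unit_vec a i - \<kappa> a * unit_vec i0 i)
      (\<lambda>i. unit_vec b i - \<eta> b * unit_vec j0 i) (unit_vec c)"
    have "col_form \<alpha> p ?x = 0" "col_form \<gamma> q ?x = 0"
      using abc rows pivots cols(4) unfolding col_form_col_point_fst col_form_col_point_snd[OF cols(4)]
      by (simp_all add: sum_unit_vec_diff) (simp_all add: \<kappa>_def \<eta>_def)
    then have "eval_poly (trilin p q r U) ?x = 0" by (rule vanish)
    with abc rows cols show ?thesis
      by (simp add: eval_poly_trilin_col_point sum_unit_vec sum_unit_vec_diff sum_subtractf W_def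
          flip: sum_distrib_left) (simp add: algebra_simps)
  qed
  have "trilin p q r U = trilin p q r (\<lambda>a b c. \<kappa> a * U i0 b c + \<eta> b * W a c)"
    by (rule trilin_cong) (rule U_eq)
  also have "\<dots> = col_linear p \<kappa> * bilin q r (U i0) + trilin p q r (\<lambda>a b c. \<eta> b * W a c)"
    by (simp only: trilin_add col_linear_mult_bilin)
  also have "trilin p q r (\<lambda>a b c. \<eta> b * W a c) = col_linear q \<eta> * bilin p r W"
    by (simp only: col_linear_mult_bilin trilin_swap12[of p q r])
  finally show ?thesis
    using col_linear_props[OF cols(1)] col_linear_props[OF cols(2)]
      bilin_props[OF cols(2,3)] bilin_props[OF cols(1,3)]
    unfolding col_homog_split_def by blast
qed

definition col_scale :: "complex \<Rightarrow> (nat \<times> nat \<Rightarrow> complex) \<Rightarrow> nat \<times> nat \<Rightarrow> complex" where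
  "col_scale s x = (\<lambda>(i, j). s ^ (j - 1) * x (i, j))"

definition vanishes_below :: "(nat \<times> nat \<Rightarrow> complex) \<Rightarrow> nat \<Rightarrow> bool" where
  "vanishes_below \<alpha> p \<longleftrightarrow> (\<forall>i j. i \<in> {1..4} \<longrightarrow> 1 \<le> j \<longrightarrow> j < p \<longrightarrow> \<alpha> (i, j) = 0)"

definition scaled_form :: "(nat \<times> nat \<Rightarrow> complex) \<Rightarrow> nat \<Rightarrow> complex \<Rightarrow> (nat \<times> nat \<Rightarrow> complex) \<Rightarrow> complex" where
  "scaled_form \<alpha> p s x = (\<Sum>j\<in>{p..3}. s ^ (j - p) * col_form \<alpha> j x)"

lemma col_form_col_scale: "col_form \<alpha> j (col_scale s x) = s ^ (j - 1) * col_form \<alpha> j x"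
  by (simp add: col_form_def col_scale_def sum_distrib_left mult_ac)

lemma lin_form_col_scale:
  assumes "p \<in> {1..3}" "vanishes_below \<alpha> p"
  shows "lin_form \<alpha> (col_scale s x) = s ^ (p - 1) * scaled_form \<alpha> p s x"
proof -
  have low: "col_form \<alpha> j x = 0" if "1 \<le> j" "j < p" for j
    using assms(2) that by (simp add: vanishes_below_def col_form_def)
  from assms(1) consider "p = 1" | "p = 2" | "p = 3" by fastforce
  then show ?thesis
    unfolding lin_form_def scaled_form_def col_form_col_scale
    by cases (simp_all add: numeral_3_eq_3 numeral_2_eq_2 low algebra_simps power2_eq_square)
qed

lemma scaled_form_at_zero:
  assumes "p \<in> {1..3}"
  shows "scaled_form \<alpha> p 0 x = col_form \<alpha> p x"
proof -
  from assms consider "p = 1" | "p = 2" | "p = 3" by fastforce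
  then show ?thesis
    unfolding scaled_form_def by cases (simp_all add: numeral_3_eq_3 numeral_2_eq_2)
qed

lemma col_form_update:
  assumes "i \<in> {1..4}"
  shows "col_form \<beta> j (x((i, k) := x (i, k) + c)) = col_form \<beta> j x + (if j = k then \<beta> (i, k) * c else 0)"
proof -
  have "col_form \<beta> j (x((i, k) := x (i, k) + c))
      = col_form \<beta> j x + (\<Sum>i'\<in>{1..4}. if i' = i \<and> j = k then \<beta> (i, k) * c else 0)"
    by (auto simp: col_form_def distrib_left sum.distrib[symmetric] intro!: sum.cong)
  with assms show ?thesis by (cases "j = k") simp_all
qed

lemma scaled_form_update:
  assumes "i \<in> {1..4}" "k \<in> {1..3}"
  shows "scaled_form \<beta> p s (x((i, k) := x (i, k) + c)) =
    scaled_form \<beta> p s x + (if p \<le> k then s ^ (k - p) * \<beta> (i, k) * c else 0)"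
proof -
  have "scaled_form \<beta> p s (x((i, k) := x (i, k) + c))
      = scaled_form \<beta> p s x + (\<Sum>j\<in>{p..3}. if j = k then s ^ (k - p) * \<beta> (i, k) * c else 0)"
    unfolding scaled_form_def col_form_update[OF assms(1)] sum.distrib[symmetric]
    by (rule sum.cong) (auto simp: distrib_left)
  with assms(2) show ?thesis by simp
qed

lemma eval_poly_trilin_col_scale:
  "eval_poly (trilin 1 2 3 T) (col_scale s x) = s ^ 3 * eval_poly (trilin 1 2 3 T) x"
  by (simp add: eval_poly_trilin col_scale_def sum_distrib_left power2_eq_square power3_eq_cube mult_ac)

lemma continuous_on_scaled_form:
  "(\<And>v. continuous_on UNIV (\<lambda>s. z s v)) \<Longrightarrow>
    continuous_on UNIV (\<lambda>s. scaled_form \<alpha> p s (z s))"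
  unfolding scaled_form_def col_form_def by (intro continuous_intros) auto

lemma continuous_on_update:
  fixes z :: "complex \<Rightarrow> nat \<times> nat \<Rightarrow> complex"
  assumes "\<And>v. continuous_on UNIV (\<lambda>s. z s v)" "continuous_on UNIV c"
  shows "continuous_on UNIV (\<lambda>s. ((z s)(w := z s w + c s)) v)"
  using assms(1) continuous_on_add[OF assms(1)[of w] assms(2)] by (cases "v = w") simp_all

lemma continuous_zero_off_zero:
  fixes f :: "complex \<Rightarrow> complex"
  assumes "continuous_on UNIV f" "\<And>s. s \<noteq> 0 \<Longrightarrow> f s = 0"
  shows "f 0 = 0"
proof -
  have "f \<midarrow>0\<rightarrow> f 0"
    using assms(1) by (simp add: continuous_on_eq_continuous_at isCont_def)
  moreover have "f \<midarrow>0\<rightarrow> 0"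
    using assms(2) by (intro tendsto_eventually) (simp add: eventually_at_filter)
  ultimately show ?thesis by (rule LIM_unique)
qed

lemma pivot_correction:
  assumes cols: "p \<in> {1..3}" "q \<in> {1..3}" and rows: "i0 \<in> {1..4}" "i1 \<in> {1..4}"
    and pivots: "\<alpha> (i0, p) \<noteq> 0" "\<gamma> (i1, q) \<noteq> 0" "\<gamma> (i0, p) = 0"
    and x: "col_form \<alpha> p x = 0" "col_form \<gamma> q x = 0"
  obtains y where "\<And>v. continuous_on UNIV (\<lambda>s. y s v)" "y 0 = x"
    "\<And>s. scaled_form \<alpha> p s (y s) = 0" "\<And>s. scaled_form \<gamma> q s (y s) = 0"
proof -
  txt \<open>Correcting at (i0, p) does not affect \<gamma>, as \<gamma> (i0, p) = 0.\<close>
  define \<mu> where "\<mu> s = - scaled_form \<gamma> q s x / \<gamma> (i1, q)" for s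
  define x1 where "x1 s = x((i1, q) := x (i1, q) + \<mu> s)" for s
  define \<rho> where "\<rho> s = - scaled_form \<alpha> p s (x1 s) / \<alpha> (i0, p)" for s
  define y where "y s = (x1 s)((i0, p) := x1 s (i0, p) + \<rho> s)" for s
  have "continuous_on UNIV (\<lambda>s. x1 s v)" for v
    using pivots(2) unfolding x1_def \<mu>_def
    by (intro continuous_on_update continuous_intros continuous_on_scaled_form) auto
  then have "continuous_on UNIV (\<lambda>s. y s v)" for v
    using pivots(1) unfolding y_def \<rho>_def
    by (intro continuous_on_update continuous_intros continuous_on_scaled_form) auto
  moreover have "y 0 = x"
    using cols x by (simp add: y_def x1_def \<rho>_def \<mu>_def scaled_form_at_zero)
  moreover have "scaled_form \<alpha> p s (y s) = 0" for s
    using cols rows pivots by (simp add: y_def scaled_form_update) (simp add: \<rho>_def)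
  moreover have "scaled_form \<gamma> q s (y s) = 0" for s
  proof -
    have "scaled_form \<gamma> q s (y s) = scaled_form \<gamma> q s (x1 s)"
      using cols rows pivots by (simp add: y_def scaled_form_update)
    also have "\<dots> = 0"
      using cols rows pivots by (simp add: x1_def scaled_form_update) (simp add: \<mu>_def)
    finally show ?thesis .
  qed
  ultimately show ?thesis by (rule that)
qed

lemma vanishes_on_leading_cols:
  assumes hom: "\<And>s x. eval_poly P (col_scale s x) = s ^ k * eval_poly P x"
    and vanish: "\<And>x. lin_form \<alpha> x = 0 \<Longrightarrow> lin_form \<gamma> x = 0 \<Longrightarrow> eval_poly P x = 0"
    and cols: "p \<in> {1..3}" "q \<in> {1..3}" and rows: "i0 \<in> {1..4}" "i1 \<in> {1..4}"
    and pivots: "\<alpha> (i0, p) \<noteq> 0" "\<gamma> (i1, q) \<noteq> 0" "\<gamma> (i0, p) = 0"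
    and below: "vanishes_below \<alpha> p" "vanishes_below \<gamma> q"
    and x: "col_form \<alpha> p x = 0" "col_form \<gamma> q x = 0"
  shows "eval_poly P x = 0"
proof -
  obtain y where cont: "\<And>v. continuous_on UNIV (\<lambda>s. y s v)" and "y 0 = x"
    and y: "\<And>s. scaled_form \<alpha> p s (y s) = 0" "\<And>s. scaled_form \<gamma> q s (y s) = 0"
    using pivot_correction[OF cols rows pivots x] by blast
  have "eval_poly P (y s) = 0" if "s \<noteq> 0" for s
  proof -
    have "lin_form \<alpha> (col_scale s (y s)) = 0" "lin_form \<gamma> (col_scale s (y s)) = 0"
      using cols below by (simp_all add: lin_form_col_scale y)
    then have "s ^ k * eval_poly P (y s) = 0"
      by (metis hom vanish)
    with that show ?thesis by simp
  qed
  then have "eval_poly P (y 0) = 0"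
    by (rule continuous_zero_off_zero[OF continuous_on_eval_poly[OF cont]])
  with \<open>y 0 = x\<close> show ?thesis by simp
qed

definition coord_form :: "nat \<times> nat \<Rightarrow> nat \<times> nat \<Rightarrow> complex" where
  "coord_form w v = (if v = w then 1 else 0)"

definition echelon_pair ::
    "(nat \<times> nat \<Rightarrow> complex) \<Rightarrow> (nat \<times> nat \<Rightarrow> complex) \<Rightarrow> nat \<Rightarrow> nat \<Rightarrow> nat \<Rightarrow> nat \<Rightarrow> bool" where
  "echelon_pair \<alpha> \<gamma> p i0 q i1 \<longleftrightarrow> p \<in> {1..3} \<and> q \<in> {1..3} \<and> i0 \<in> {1..4} \<and> i1 \<in> {1..4}
    \<and> \<alpha> (i0, p) \<noteq> 0 \<and> \<gamma> (i1, q) \<noteq> 0 \<and> \<gamma> (i0, p) = 0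
    \<and> vanishes_below \<alpha> p \<and> vanishes_below \<gamma> q"

lemma leading_entry:
  assumes "v \<in> {1..4} \<times> {1..3}" "\<alpha> v \<noteq> 0"
  obtains p i where "p \<in> {1..3}" "i \<in> {1..4}" "\<alpha> (i, p) \<noteq> 0" "vanishes_below \<alpha> p"
proof -
  define P where "P j \<longleftrightarrow> 1 \<le> j \<and> (\<exists>i\<in>{1..4}. \<alpha> (i, j) \<noteq> 0)" for j
  define p where "p = (LEAST j. P j)"
  have "P (snd v)" using assms by (auto simp: P_def)
  then have "P p" "p \<le> snd v" unfolding p_def by (auto intro: LeastI Least_le)
  moreover have "vanishes_below \<alpha> p"
    unfolding vanishes_below_def
  proof (intro allI impI)
    fix i j :: nat assume "i \<in> {1..4}" "1 \<le> j" "j < p"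
    moreover from \<open>j < p\<close> have "\<not> P j" unfolding p_def by (rule not_less_Least)
    ultimately show "\<alpha> (i, j) = 0" by (auto simp: P_def)
  qed
  ultimately show ?thesis using assms(1) that[of p] by (auto simp: P_def)
qed

lemma lin_form_eq_zero: "(\<And>v. v \<in> {1..4} \<times> {1..3} \<Longrightarrow> \<alpha> v = 0) \<Longrightarrow> lin_form \<alpha> x = 0"
  by (simp add: lin_form_def col_form_def)

lemma lin_form_diff: "lin_form (\<lambda>v. \<gamma> v - k * \<alpha> v) x = lin_form \<gamma> x - k * lin_form \<alpha> x"
  by (simp add: lin_form_def col_form_def sum_subtractf sum_distrib_left algebra_simps)

lemma echelon_pair_of_pivot:
  assumes "p \<in> {1..3}" "i0 \<in> {1..4}" "\<alpha> (i0, p) \<noteq> 0" "vanishes_below \<alpha> p"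
  obtains \<gamma>' q i1 where "echelon_pair \<alpha> \<gamma>' p i0 q i1"
    "\<And>x. lin_form \<alpha> x = 0 \<Longrightarrow> lin_form \<gamma>' x = 0 \<Longrightarrow> lin_form \<gamma> x = 0"
proof -
  define \<kappa> where "\<kappa> = \<gamma> (i0, p) / \<alpha> (i0, p)"
  define \<gamma>'' where "\<gamma>'' = (\<lambda>v. \<gamma> v - \<kappa> * \<alpha> v)"
  have reduced: "\<gamma>'' (i0, p) = 0" using assms(3) by (simp add: \<gamma>''_def \<kappa>_def)
  have \<gamma>_from: "lin_form \<gamma> x = 0" if "lin_form \<alpha> x = 0" "lin_form \<gamma>'' x = 0" for x
    using that by (simp add: \<gamma>''_def lin_form_diff)
  show ?thesis
  proof (cases "\<exists>v\<in>{1..4} \<times> {1..3}. \<gamma>'' v \<noteq> 0")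
    case True
    then obtain v where "v \<in> {1..4} \<times> {1..3}" "\<gamma>'' v \<noteq> 0" by blast
    then obtain q i1 where "q \<in> {1..3}" "i1 \<in> {1..4}" "\<gamma>'' (i1, q) \<noteq> 0" "vanishes_below \<gamma>'' q"
      by (rule leading_entry)
    with assms reduced \<gamma>_from show ?thesis
      by (intro that[of \<gamma>'' q i1]) (auto simp: echelon_pair_def)
  next
    case False
    txt \<open>Here \<gamma> is a multiple of \<alpha> on the matrix entries, so replacing it by any coordinate form
      reduced against \<alpha> only shrinks the common zero set.\<close>
    define i1 where "i1 = (if i0 = 1 then 2 else 1 :: nat)"
    have "echelon_pair \<alpha> (coord_form (i1, p)) p i0 p i1"
      using assms by (auto simp: echelon_pair_def coord_form_def vanishes_below_def i1_def)
    moreover have "lin_form \<gamma>'' x = 0" for x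
      using False by (intro lin_form_eq_zero) blast
    ultimately show ?thesis using \<gamma>_from that by blast
  qed
qed

lemma echelon_pair_exists:
  obtains \<alpha>' \<gamma>' p i0 q i1 where "echelon_pair \<alpha>' \<gamma>' p i0 q i1"
    "\<And>x. lin_form \<alpha>' x = 0 \<Longrightarrow> lin_form \<gamma>' x = 0 \<Longrightarrow> lin_form \<alpha> x = 0 \<and> lin_form \<gamma> x = 0"
proof -
  obtain \<xi> \<zeta> p i0 where pivot: "p \<in> {1..3}" "i0 \<in> {1..4}" "\<xi> (i0, p) \<noteq> 0" "vanishes_below \<xi> p"
    and sub: "\<And>x. lin_form \<xi> x = 0 \<Longrightarrow> lin_form \<zeta> x = 0 \<Longrightarrow> lin_form \<alpha> x = 0 \<and> lin_form \<gamma> x = 0"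
  proof (cases "\<exists>v\<in>{1..4} \<times> {1..3}. \<alpha> v \<noteq> 0")
    case True
    then obtain v where "v \<in> {1..4} \<times> {1..3}" "\<alpha> v \<noteq> 0" by blast
    then obtain p i0 where "p \<in> {1..3}" "i0 \<in> {1..4}" "\<alpha> (i0, p) \<noteq> 0" "vanishes_below \<alpha> p"
      by (rule leading_entry)
    then show ?thesis by (rule that[of p i0 \<alpha> \<gamma>]) simp
  next
    case \<alpha>_zero: False
    then have lin_\<alpha>: "lin_form \<alpha> x = 0" for x by (intro lin_form_eq_zero) blast
    show ?thesis
    proof (cases "\<exists>v\<in>{1..4} \<times> {1..3}. \<gamma> v \<noteq> 0")
      case True
      then obtain v where "v \<in> {1..4} \<times> {1..3}" "\<gamma> v \<noteq> 0" by blast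
      then obtain p i0 where "p \<in> {1..3}" "i0 \<in> {1..4}" "\<gamma> (i0, p) \<noteq> 0" "vanishes_below \<gamma> p"
        by (rule leading_entry)
      then show ?thesis
        by (intro that[of p i0 \<gamma> "\<lambda>_. 0"]) (simp_all add: lin_\<alpha>)
    next
      case False
      then have "lin_form \<gamma> x = 0" for x by (intro lin_form_eq_zero) blast
      then show ?thesis using lin_\<alpha>
        by (intro that[of 1 1 "coord_form (1, 1)"]) (auto simp: coord_form_def vanishes_below_def)
    qed
  qed
  obtain \<gamma>' q i1 where "echelon_pair \<xi> \<gamma>' p i0 q i1"
      "\<And>x. lin_form \<xi> x = 0 \<Longrightarrow> lin_form \<gamma>' x = 0 \<Longrightarrow> lin_form \<zeta> x = 0"
    using echelon_pair_of_pivot[OF pivot] by blast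
  with sub show ?thesis by (intro that) blast+
qed

lemma col_homog_split_of_vanishing:
  assumes vanish: "\<And>x. lin_form \<alpha> x = 0 \<Longrightarrow> lin_form \<gamma> x = 0 \<Longrightarrow> eval_poly (trilin 1 2 3 T) x = 0"
  shows "col_homog_split (trilin 1 2 3 T)"
proof -
  obtain \<alpha>' \<gamma>' p i0 q i1 where ech: "echelon_pair \<alpha>' \<gamma>' p i0 q i1"
    and sub: "\<And>x. lin_form \<alpha>' x = 0 \<Longrightarrow> lin_form \<gamma>' x = 0 \<Longrightarrow> lin_form \<alpha> x = 0 \<and> lin_form \<gamma> x = 0"
    using echelon_pair_exists[of \<alpha> \<gamma>] by blast
  have vanish': "eval_poly (trilin 1 2 3 T) x = 0" if "lin_form \<alpha>' x = 0" "lin_form \<gamma>' x = 0" for x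
    using sub[OF that] vanish by blast
  have lead: "eval_poly (trilin 1 2 3 T) x = 0" if "col_form \<alpha>' p x = 0" "col_form \<gamma>' q x = 0" for x
    using ech that unfolding echelon_pair_def
    by (intro vanishes_on_leading_cols[of "trilin 1 2 3 T" 3 \<alpha>' \<gamma>' p q i0 i1,
          OF eval_poly_trilin_col_scale vanish']) auto
  show ?thesis
  proof (cases "p = q")
    case True
    define q' where "q' = (if p = 1 then 2 else 1 :: nat)"
    have "p \<in> {1..3}" "q' \<in> {1..3}" "p \<noteq> q'" using ech by (auto simp: echelon_pair_def q'_def)
    then obtain r U where "r \<in> {1..3}" "r \<noteq> p" "r \<noteq> q'" and T_eq: "trilin 1 2 3 T = trilin p q' r U"
      by (rule trilin_permute)
    with \<open>p \<in> {1..3}\<close> \<open>q' \<in> {1..3}\<close> \<open>p \<noteq> q'\<close> show ?thesis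
      using ech lead True unfolding T_eq
      by (intro col_homog_split_trilin_one_col[of p q' r i0 i1 \<alpha>' \<gamma>']) (auto simp: echelon_pair_def)
  next
    case False
    have "p \<in> {1..3}" "q \<in> {1..3}" using ech by (auto simp: echelon_pair_def)
    then obtain r U where "r \<in> {1..3}" "r \<noteq> p" "r \<noteq> q" and T_eq: "trilin 1 2 3 T = trilin p q r U"
      using False by (rule trilin_permute)
    with \<open>p \<in> {1..3}\<close> \<open>q \<in> {1..3}\<close> False show ?thesis
      using ech lead unfolding T_eq
      by (intro col_homog_split_trilin_two_cols[of p q r i0 i1 \<alpha>' \<gamma>']) (auto simp: echelon_pair_def)
  qed
qed

theorem lemma7p3:
  fixes \<Delta> a b c d :: mpoly
  assumes "in_S \<Delta>" and "col_homog_deg (1, 1, 1) \<Delta>"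
    and "in_S a" and "in_S b" and "in_S c" and "in_S d"
    and "std_homog 1 a" and "std_homog 1 c"
    and "std_homog 2 b" and "std_homog 2 d"
    and "\<Delta> = a * b + c * d"
  shows "\<exists>a' b' c' d'. in_S a' \<and> in_S b' \<and> in_S c' \<and> in_S d'
    \<and> col_homog a' \<and> col_homog b' \<and> col_homog c' \<and> col_homog d'
    \<and> std_homog 1 a' \<and> std_homog 1 c' \<and> std_homog 2 b' \<and> std_homog 2 d'
    \<and> \<Delta> = a' * b' + c' * d'"
proof -
  define T where "T a b c = Poly_Mapping.lookup \<Delta> (trimono a b c)" for a b c
  have \<Delta>_eq: "\<Delta> = trilin 1 2 3 T"
    unfolding T_def using assms(1,2) by (rule trilin_of_col_homog_111)
  have "eval_poly \<Delta> x = 0"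
    if "lin_form (\<lambda>v. Poly_Mapping.lookup a (var_mono v)) x = 0"
      "lin_form (\<lambda>v. Poly_Mapping.lookup c (var_mono v)) x = 0" for x
    using that assms(3,5,7,8,11)
    by (simp add: eval_poly_add eval_poly_mult eval_poly_std_homog_1)
  then have "col_homog_split (trilin 1 2 3 T)"
    unfolding \<Delta>_eq by (rule col_homog_split_of_vanishing)
  then show ?thesis unfolding col_homog_split_def \<Delta>_eq .
qed

end
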